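(* For every positive integer $n$ there exists a word of length $n$ over an alphabet of size $O(\log n)$ that has at least $2^{\lfloor (n+1)/16\rfloor}$ different shortest s-covers.
   Context: For words $C,S$, $C$ is an \emph{s-cover} of $S$ if for every position $i$ of $S$ there exist indices $j_0<\dots<j_{|C|-1}$ with $S[j_t]=C[t]$ for all $t$ and $i\in\{j_0,\dots,j_{|C|-1}\}$. A shortest s-cover of $S$ is an s-cover of $S$ of minimum length. *)

theory Defs
  imports Main "HOL-Library.Landau_Symbols"
begin

definition s_cover :: "'a list \<Rightarrow> 'a list \<Rightarrow> bool" where
  "s_cover C S \<longleftrightarrow>
     (\<forall>i < length S. \<exists>j :: nat \<Rightarrow> nat.
        strict_mono_on {..<length C} j \<and>
        (\<forall>t < length C. j t < length S \<and> S ! (j t) = C ! t) \<and>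
        (\<exists>t < length C. j t = i))"

definition shortest_s_cover :: "'a list \<Rightarrow> 'a list \<Rightarrow> bool" where
  "shortest_s_cover C S \<longleftrightarrow> s_cover C S \<and> (\<forall>D. s_cover D S \<longrightarrow> length C \<le> length D)"

end

theory Submission
  imports Defs "HOL-Library.Sublist" "HOL-Library.Log_Nat" "HOL-Real_Asymp.Real_Asymp"
begin

text \<open>
  If a letter x occurs exactly once in S = X @ x # Y, then every shortest s-cover of S has the form
  C1 @ x # C2 with C1 and C2 shortest s-covers of X and Y: the cover contains x exactly once, and
  every occurrence of it in S through a position of X or Y must match this x with the separator.
  Hence the number of shortest s-covers is multiplicative across such separators. The gadget
  001012021010 has the two shortest s-covers 012010 and 010210 (nothing shorter covers it, by
  exhaustive evaluation). Joining q gadgets along a balanced binary tree, with a fresh separator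
  at each internal node that depends only on its height, yields 2^q shortest s-covers over
  3 + ceillog2 q letters. One more separator followed by zeros pads this to any length n, where
  q = (n + 1) div 16.
\<close>

section \<open>Index embeddings and subsequences\<close>

definition index_embedding :: "(nat \<Rightarrow> nat) \<Rightarrow> 'a list \<Rightarrow> 'a list \<Rightarrow> bool" where
  "index_embedding j xs ys \<longleftrightarrow>
     strict_mono_on {..<length xs} j \<and> (\<forall>t < length xs. j t < length ys \<and> ys ! j t = xs ! t)"

lemma index_embedding_take:
  assumes "index_embedding j xs ys" "t < length xs"
  shows "index_embedding j (take t xs) (take (j t) ys)"
proof -
  have "j u < j t" if "u < t" for u
    using assms that unfolding index_embedding_def by (auto intro: strict_mono_onD)
  with assms show ?thesis unfolding index_embedding_def strict_mono_on_def by auto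
qed

lemma index_embedding_drop:
  assumes "index_embedding j xs ys" "t < length xs"
  shows "index_embedding (\<lambda>u. j (Suc t + u) - Suc (j t)) (drop (Suc t) xs) (drop (Suc (j t)) ys)"
  unfolding index_embedding_def
proof (intro conjI allI impI strict_mono_onI)
  fix u v assume "u \<in> {..<length (drop (Suc t) xs)}" "v \<in> {..<length (drop (Suc t) xs)}" "u < v"
  moreover from this assms have "j (Suc t + u) < j (Suc t + v)" "j t < j (Suc t + u)"
    unfolding index_embedding_def by (auto intro: strict_mono_onD)
  ultimately show "j (Suc t + u) - Suc (j t) < j (Suc t + v) - Suc (j t)" by linarith
next
  fix u assume "u < length (drop (Suc t) xs)"
  moreover from this assms have "j t < j (Suc t + u)" "j (Suc t + u) < length ys"
    "ys ! j (Suc t + u) = xs ! (Suc t + u)"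
    unfolding index_embedding_def by (auto intro: strict_mono_onD)
  ultimately show "j (Suc t + u) - Suc (j t) < length (drop (Suc (j t)) ys)"
    "drop (Suc (j t)) ys ! (j (Suc t + u) - Suc (j t)) = drop (Suc t) xs ! u"
    by auto
qed

lemma index_embedding_Cons:
  assumes "index_embedding j xs ys"
  shows "index_embedding (\<lambda>t. case t of 0 \<Rightarrow> 0 | Suc t \<Rightarrow> Suc (j t)) (x # xs) (x # ys)"
  using assms unfolding index_embedding_def strict_mono_on_def
  by (auto split: nat.splits simp: less_Suc_eq_0_disj)

lemma index_embedding_append:
  assumes "index_embedding j xs ys" "index_embedding j' xs' ys'"
  shows "index_embedding (\<lambda>t. if t < length xs then j t else length ys + j' (t - length xs))
           (xs @ xs') (ys @ ys')"
  unfolding index_embedding_def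
proof (intro conjI allI impI strict_mono_onI)
  fix u v assume "u \<in> {..<length (xs @ xs')}" "v \<in> {..<length (xs @ xs')}" "u < v"
  have j: "j u < j v" if "v < length xs"
    using assms(1) that \<open>u < v\<close> by (auto simp: index_embedding_def strict_mono_on_def)
  have j': "j' (u - length xs) < j' (v - length xs)" if "length xs \<le> u"
    using assms(2) that \<open>u < v\<close> \<open>v \<in> {..<length (xs @ xs')}\<close>
    unfolding index_embedding_def by (auto intro: strict_mono_onD)
  have "j u < length ys" if "u < length xs"
    using assms(1) that by (auto simp: index_embedding_def)
  with j j' \<open>u < v\<close> show "(if u < length xs then j u else length ys + j' (u - length xs))
      < (if v < length xs then j v else length ys + j' (v - length xs))"
    by (auto simp: not_less)
next
  fix t assume "t < length (xs @ xs')"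
  with assms show "(if t < length xs then j t else length ys + j' (t - length xs)) < length (ys @ ys')"
    "(ys @ ys') ! (if t < length xs then j t else length ys + j' (t - length xs)) = (xs @ xs') ! t"
    unfolding index_embedding_def by (auto simp: nth_append)
qed

lemma subseq_iff_index_embedding: "subseq xs ys \<longleftrightarrow> (\<exists>j. index_embedding j xs ys)"
proof
  show "subseq xs ys \<Longrightarrow> \<exists>j. index_embedding j xs ys"
  proof (induction rule: list_emb.induct)
    case (list_emb_Nil ys)
    then show ?case by (simp add: index_embedding_def)
  next
    case (list_emb_Cons xs ys y)
    then obtain j where "index_embedding j xs ys" by blast
    then have "index_embedding (\<lambda>t. Suc (j t)) xs (y # ys)"
      by (auto simp: index_embedding_def strict_mono_on_def)
    then show ?case by blast
  next
    case (list_emb_Cons2 x y xs ys)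
    then show ?case using index_embedding_Cons by fastforce
  qed
next
  show "\<exists>j. index_embedding j xs ys \<Longrightarrow> subseq xs ys"
  proof (induction xs arbitrary: ys)
    case Nil
    then show ?case by simp
  next
    case (Cons x xs)
    then obtain j where j: "index_embedding j (x # xs) ys" by blast
    then have k: "j 0 < length ys" "ys ! j 0 = x" by (auto simp: index_embedding_def)
    from index_embedding_drop[OF j, of 0]
    have "index_embedding (\<lambda>u. j (Suc u) - Suc (j 0)) xs (drop (Suc (j 0)) ys)" by simp
    with Cons.IH have "subseq xs (drop (Suc (j 0)) ys)" by blast
    then have "subseq (x # xs) (ys ! j 0 # drop (Suc (j 0)) ys)" using k by simp
    then show ?case using id_take_nth_drop[OF k(1)] by (metis list_emb_append2)
  qed
qed

lemma subseq_rev_iff: "subseq (rev xs) (rev ys) \<longleftrightarrow> subseq xs ys"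
proof -
  have rev: "subseq (rev xs) (rev ys)" if "subseq xs ys" for xs ys :: "'a list"
    using that
  proof induction
    case (list_emb_Cons xs ys y)
    then show ?case by (simp add: subseq_rev_drop_many)
  next
    case (list_emb_Cons2 x y xs ys)
    then show ?case by (simp add: list_emb_append_mono)
  qed simp
  show ?thesis using rev[of "rev xs" "rev ys"] rev[of xs ys] by auto
qed

lemma subseq_set_subset: "subseq xs ys \<Longrightarrow> set xs \<subseteq> set ys"
  by (induction rule: list_emb.induct) auto

lemma subseq_append_Cons_fresh:
  assumes "subseq (xs @ x # zs) (ys @ x # ws)" "x \<notin> set xs" "x \<notin> set ys" "x \<notin> set ws"
  shows "subseq xs ys"
proof -
  obtain L1 L2 where L: "xs @ x # zs = L1 @ L2" "subseq L1 ys" "subseq L2 (x # ws)"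
    using assms(1) by (rule subseq_appendE)
  have "x \<notin> set L1" using subseq_set_subset[OF L(2)] assms(3) by blast
  then obtain M where M: "xs = L1 @ M" "L2 = M @ x # zs"
    using L(1) by (auto simp: append_eq_append_conv2 append_eq_Cons_conv Cons_eq_append_conv)
  show ?thesis
  proof (cases M)
    case Nil
    then show ?thesis using M L by simp
  next
    case (Cons m M')
    then have "m \<noteq> x" using M assms(2) by auto
    then have "subseq (m # M' @ x # zs) ws" using L(3) M Cons subseq_Cons2_neq by fastforce
    then have "x \<in> set ws" using subseq_set_subset by fastforce
    with assms(4) show ?thesis by blast
  qed
qed

lemma ex_index_embedding_through_iff:
  assumes t: "t < length C" and i: "i < length S"
  shows "(\<exists>j. index_embedding j C S \<and> j t = i) \<longleftrightarrow>
    C ! t = S ! i \<and> subseq (take t C) (take i S) \<and> subseq (drop (Suc t) C) (drop (Suc i) S)"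
proof
  assume "\<exists>j. index_embedding j C S \<and> j t = i"
  then obtain j where j: "index_embedding j C S" and "j t = i" by blast
  have "index_embedding j (take t C) (take i S)"
    using index_embedding_take[OF j t] \<open>j t = i\<close> by simp
  moreover have "index_embedding (\<lambda>u. j (Suc t + u) - Suc i) (drop (Suc t) C) (drop (Suc i) S)"
    using index_embedding_drop[OF j t] \<open>j t = i\<close> by simp
  moreover have "C ! t = S ! i" using j t \<open>j t = i\<close> by (auto simp: index_embedding_def)
  ultimately show "C ! t = S ! i \<and> subseq (take t C) (take i S) \<and> subseq (drop (Suc t) C) (drop (Suc i) S)"
    unfolding subseq_iff_index_embedding by blast
next
  assume "C ! t = S ! i \<and> subseq (take t C) (take i S) \<and> subseq (drop (Suc t) C) (drop (Suc i) S)"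
  then obtain j1 j2 where eq: "C ! t = S ! i"
    and j1: "index_embedding j1 (take t C) (take i S)"
    and j2: "index_embedding j2 (drop (Suc t) C) (drop (Suc i) S)"
    unfolding subseq_iff_index_embedding by blast
  from index_embedding_append[OF j1 index_embedding_Cons[OF j2, of "S ! i"]]
  obtain j where "index_embedding j (take t C @ S ! i # drop (Suc t) C) (take i S @ S ! i # drop (Suc i) S)"
    and "j (length (take t C)) = length (take i S)"
    by fastforce
  then show "\<exists>j. index_embedding j C S \<and> j t = i"
    using id_take_nth_drop[OF t] id_take_nth_drop[OF i] eq t i by auto
qed

section \<open>Characterisations of s-covers\<close>

theorem s_cover_iff:
  "s_cover C S \<longleftrightarrow> (\<forall>i < length S. \<exists>t < length C.
     C ! t = S ! i \<and> subseq (take t C) (take i S) \<and> subseq (drop (Suc t) C) (drop (Suc i) S))"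
proof -
  have "s_cover C S \<longleftrightarrow> (\<forall>i < length S. \<exists>t < length C. \<exists>j. index_embedding j C S \<and> j t = i)"
    unfolding s_cover_def index_embedding_def by blast
  then show ?thesis using ex_index_embedding_through_iff by (metis (no_types, lifting))
qed

theorem s_cover_iff_split:
  "s_cover C S \<longleftrightarrow>
     (\<forall>X y Y. S = X @ y # Y \<longrightarrow> (\<exists>A B. C = A @ y # B \<and> subseq A X \<and> subseq B Y))"
proof
  assume cover: "s_cover C S"
  show "\<forall>X y Y. S = X @ y # Y \<longrightarrow> (\<exists>A B. C = A @ y # B \<and> subseq A X \<and> subseq B Y)"
  proof (intro allI impI)
    fix X y Y assume S: "S = X @ y # Y"
    then obtain t where "t < length C" "C ! t = y" "subseq (take t C) X" "subseq (drop (Suc t) C) Y"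
      using cover[unfolded s_cover_iff, rule_format, of "length X"] by auto
    then show "\<exists>A B. C = A @ y # B \<and> subseq A X \<and> subseq B Y"
      using id_take_nth_drop by metis
  qed
next
  assume split: "\<forall>X y Y. S = X @ y # Y \<longrightarrow> (\<exists>A B. C = A @ y # B \<and> subseq A X \<and> subseq B Y)"
  show "s_cover C S" unfolding s_cover_iff
  proof (intro allI impI)
    fix i assume "i < length S"
    then obtain A B where "C = A @ S ! i # B" "subseq A (take i S)" "subseq B (drop (Suc i) S)"
      using split id_take_nth_drop by metis
    then show "\<exists>t < length C. C ! t = S ! i \<and> subseq (take t C) (take i S) \<and> subseq (drop (Suc t) C) (drop (Suc i) S)"
      by (intro exI[of _ "length A"]) auto
  qed
qed

lemma s_cover_rev_iff: "s_cover (rev C) (rev S) \<longleftrightarrow> s_cover C S"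
proof -
  have rev: "s_cover (rev C) (rev S)" if cover: "s_cover C S" for C S :: "'a list"
    unfolding s_cover_iff_split
  proof (intro allI impI)
    fix X y Y assume "rev S = X @ y # Y"
    then have "S = rev (X @ y # Y)" by (metis rev_rev_ident)
    then have "S = rev Y @ y # rev X" by simp
    then obtain A B where "C = A @ y # B" "subseq A (rev Y)" "subseq B (rev X)"
      using cover unfolding s_cover_iff_split by blast
    then show "\<exists>A B. rev C = A @ y # B \<and> subseq A X \<and> subseq B Y"
      using subseq_rev_iff[of A "rev Y"] subseq_rev_iff[of B "rev X"]
      by (intro exI[of _ "rev B"] exI[of _ "rev A"]) simp
  qed
  show ?thesis using rev[of "rev C" "rev S"] rev[of C S] by auto
qed

lemma s_cover_refl: "s_cover S S"
  unfolding s_cover_iff_split by blast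

text \<open>The hypothesis S \<noteq> [] is needed: every word is an s-cover of the empty word.\<close>

lemma s_cover_imp_subseq:
  assumes "s_cover C S" "S \<noteq> []"
  shows "subseq C S"
proof -
  obtain y Y where S: "S = y # Y" using \<open>S \<noteq> []\<close> by (cases S) auto
  then obtain A B where "C = A @ y # B" "subseq A []" "subseq B Y"
    using assms(1) unfolding s_cover_iff_split by (metis append_Nil)
  with S show ?thesis by (auto dest: list_emb_Nil2)
qed

section \<open>Splitting at a letter that occurs once\<close>

lemma s_cover_left_factor:
  assumes cover: "s_cover (C1 @ x # C2) (X @ x # Y)"
    and x: "x \<notin> set X" "x \<notin> set Y" and C1: "subseq C1 X"
  shows "s_cover C1 X"
  unfolding s_cover_iff_split
proof (intro allI impI)
  fix X1 y X2 assume X: "X = X1 @ y # X2"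
  then have "X @ x # Y = X1 @ y # (X2 @ x # Y)" by simp
  then obtain A B where C: "C1 @ x # C2 = A @ y # B" and A: "subseq A X1" and B: "subseq B (X2 @ x # Y)"
    using cover unfolding s_cover_iff_split by blast
  have "y \<noteq> x" "x \<notin> set A" "x \<notin> set C1" "x \<notin> set X2"
    using X x subseq_set_subset[OF A] subseq_set_subset[OF C1] by auto
  from C obtain us where
    "C1 = A @ us \<and> us @ x # C2 = y # B \<or> C1 @ us = A \<and> x # C2 = us @ y # B"
    by (auto simp: append_eq_append_conv2)
  with \<open>y \<noteq> x\<close> \<open>x \<notin> set A\<close> obtain B' where C1_eq: "C1 = A @ y # B'" and B_eq: "B = B' @ x # C2"
    by (cases us) auto
  have "subseq B' X2"
    using subseq_append_Cons_fresh B B_eq C1_eq \<open>x \<notin> set C1\<close> \<open>x \<notin> set X2\<close> x(2) by auto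
  with C1_eq A show "\<exists>A B. C1 = A @ y # B \<and> subseq A X1 \<and> subseq B X2" by blast
qed

theorem s_cover_append_Cons_iff:
  assumes x: "x \<notin> set X" "x \<notin> set Y" and ne: "X \<noteq> []" "Y \<noteq> []"
  shows "s_cover C (X @ x # Y) \<longleftrightarrow> (\<exists>C1 C2. C = C1 @ x # C2 \<and> s_cover C1 X \<and> s_cover C2 Y)"
proof
  assume cover: "s_cover C (X @ x # Y)"
  then obtain C1 C2 where C: "C = C1 @ x # C2" and C1: "subseq C1 X" and C2: "subseq C2 Y"
    unfolding s_cover_iff_split by blast
  have "s_cover C1 X"
    using s_cover_left_factor[OF cover[unfolded C] x C1] .
  moreover have "s_cover (rev C2 @ x # rev C1) (rev Y @ x # rev X)"
    using cover C s_cover_rev_iff[of C "X @ x # Y"] by simp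
  from s_cover_left_factor[OF this] have "s_cover (rev C2) (rev Y)"
    using x C2 subseq_rev_iff[of C2 Y] by simp
  then have "s_cover C2 Y" by (simp add: s_cover_rev_iff)
  ultimately show "\<exists>C1 C2. C = C1 @ x # C2 \<and> s_cover C1 X \<and> s_cover C2 Y"
    using C by blast
next
  assume "\<exists>C1 C2. C = C1 @ x # C2 \<and> s_cover C1 X \<and> s_cover C2 Y"
  then obtain C1 C2 where C: "C = C1 @ x # C2" and cover1: "s_cover C1 X" and cover2: "s_cover C2 Y"
    by blast
  have sub1: "subseq C1 X" and sub2: "subseq C2 Y"
    using cover1 cover2 ne s_cover_imp_subseq by blast+
  show "s_cover C (X @ x # Y)" unfolding s_cover_iff_split
  proof (intro allI impI)
    fix X' y Y' assume "X @ x # Y = X' @ y # Y'"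
    then consider (left) Z where "X = X' @ y # Z" "Y' = Z @ x # Y"
      | (middle) "X' = X" "y = x" "Y' = Y"
      | (right) Z where "X' = X @ x # Z" "Y = Z @ y # Y'"
      by (auto simp: append_eq_append_conv2 Cons_eq_append_conv append_eq_Cons_conv)
    then show "\<exists>A B. C = A @ y # B \<and> subseq A X' \<and> subseq B Y'"
    proof cases
      case left
      then obtain A B where "C1 = A @ y # B" "subseq A X'" "subseq B Z"
        using cover1 unfolding s_cover_iff_split by blast
      with left C sub2 show ?thesis by (auto intro: list_emb_append_mono)
    next
      case middle
      with C sub1 sub2 show ?thesis by blast
    next
      case right
      then obtain A B where "C2 = A @ y # B" "subseq A Z" "subseq B Y'"
        using cover2 unfolding s_cover_iff_split by blast
      with right C sub1 show ?thesis
        by (intro exI[of _ "C1 @ x # A"] exI[of _ B]) (auto intro: list_emb_append_mono)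
    qed
  qed
qed

theorem shortest_s_cover_append_Cons_iff:
  assumes x: "x \<notin> set X" "x \<notin> set Y" and ne: "X \<noteq> []" "Y \<noteq> []"
  shows "shortest_s_cover C (X @ x # Y) \<longleftrightarrow>
    (\<exists>C1 C2. C = C1 @ x # C2 \<and> shortest_s_cover C1 X \<and> shortest_s_cover C2 Y)"
  (is "_ \<longleftrightarrow> ?split")
proof
  assume shortest: "shortest_s_cover C (X @ x # Y)"
  then obtain C1 C2 where C: "C = C1 @ x # C2" and cover1: "s_cover C1 X" and cover2: "s_cover C2 Y"
    unfolding shortest_s_cover_def s_cover_append_Cons_iff[OF assms] by blast
  have "length C1 \<le> length D" if "s_cover D X" for D
  proof -
    have "s_cover (D @ x # C2) (X @ x # Y)"
      unfolding s_cover_append_Cons_iff[OF assms] using that cover2 by blast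
    with shortest C show ?thesis by (auto simp: shortest_s_cover_def)
  qed
  moreover have "length C2 \<le> length D" if "s_cover D Y" for D
  proof -
    have "s_cover (C1 @ x # D) (X @ x # Y)"
      unfolding s_cover_append_Cons_iff[OF assms] using that cover1 by blast
    with shortest C show ?thesis by (auto simp: shortest_s_cover_def)
  qed
  ultimately show ?split
    using C cover1 cover2 by (auto simp: shortest_s_cover_def)
next
  assume ?split
  then obtain C1 C2 where C: "C = C1 @ x # C2"
    and shortest1: "shortest_s_cover C1 X" and shortest2: "shortest_s_cover C2 Y" by blast
  have "length C \<le> length D" if cover: "s_cover D (X @ x # Y)" for D
  proof -
    obtain D1 D2 where "D = D1 @ x # D2" "s_cover D1 X" "s_cover D2 Y"
      using cover unfolding s_cover_append_Cons_iff[OF assms] by blast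
    with C shortest1 shortest2 show ?thesis by (force simp: shortest_s_cover_def)
  qed
  moreover have "s_cover C (X @ x # Y)"
    unfolding s_cover_append_Cons_iff[OF assms] using C shortest1 shortest2
    by (auto simp: shortest_s_cover_def)
  ultimately show "shortest_s_cover C (X @ x # Y)" by (simp add: shortest_s_cover_def)
qed

lemma shortest_s_cover_imp_subseq:
  assumes "shortest_s_cover C S"
  shows "subseq C S"
proof (cases "S = []")
  case True
  with assms have "length C \<le> length S"
    using s_cover_refl unfolding shortest_s_cover_def by blast
  with True show ?thesis by simp
next
  case False
  with assms show ?thesis using s_cover_imp_subseq unfolding shortest_s_cover_def by blast
qed

lemma finite_shortest_s_covers: "finite {C. shortest_s_cover C S}"
proof (rule finite_subset)
  show "{C. shortest_s_cover C S} \<subseteq> set (subseqs S)"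
    using shortest_s_cover_imp_subseq by auto
qed simp

lemma card_shortest_s_covers_pos: "0 < card {C. shortest_s_cover C S}"
proof -
  obtain C where "s_cover C S" "\<forall>D. s_cover D S \<longrightarrow> length C \<le> length D"
    using ex_has_least_nat[of "\<lambda>C. s_cover C S" S length] s_cover_refl by blast
  then have "C \<in> {C. shortest_s_cover C S}" by (simp add: shortest_s_cover_def)
  then show ?thesis using finite_shortest_s_covers card_gt_0_iff by blast
qed

theorem card_shortest_s_covers_append_Cons:
  assumes x: "x \<notin> set X" "x \<notin> set Y" and ne: "X \<noteq> []" "Y \<noteq> []"
  shows "card {C. shortest_s_cover C (X @ x # Y)} =
    card {C. shortest_s_cover C X} * card {C. shortest_s_cover C Y}"
proof -
  let ?glue = "\<lambda>(C1, C2). C1 @ x # C2"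
  let ?pairs = "{C1. shortest_s_cover C1 X} \<times> {C2. shortest_s_cover C2 Y}"
  have image: "{C. shortest_s_cover C (X @ x # Y)} = ?glue ` ?pairs"
    using shortest_s_cover_append_Cons_iff[OF assms] by fastforce
  have "x \<notin> set C1" "x \<notin> set C2" if "(C1, C2) \<in> ?pairs" for C1 C2
    using that x shortest_s_cover_imp_subseq subseq_set_subset by fastforce+
  then have "inj_on ?glue ?pairs"
    by (intro inj_onI) (auto simp: append_Cons_eq_iff)
  then show ?thesis
    unfolding image by (simp add: card_image card_cartesian_product)
qed

section \<open>A word with many shortest s-covers\<close>

definition gadget :: "nat list" where
  "gadget = [0, 0, 1, 0, 1, 2, 0, 2, 1, 0, 1, 0]"

lemma s_cover_gadget: "s_cover [0, 1, 2, 0, 1, 0] gadget" "s_cover [0, 1, 0, 2, 1, 0] gadget"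
  unfolding s_cover_iff gadget_def by code_simp+

lemma no_short_s_cover_gadget:
  "\<forall>k < 6. \<forall>D \<in> set (List.n_lists k [0, 1, 2]). \<not> s_cover D gadget"
  unfolding s_cover_iff gadget_def by code_simp

lemma length_s_cover_gadget:
  assumes "s_cover D gadget"
  shows "6 \<le> length D"
proof (rule ccontr)
  assume "\<not> 6 \<le> length D"
  moreover have "set D \<subseteq> set [0, 1, 2]"
    using subseq_set_subset[OF s_cover_imp_subseq[OF assms]] by (auto simp: gadget_def)
  ultimately have "D \<in> set (List.n_lists (length D) [0, 1, 2])" "length D < 6"
    by (auto simp: set_n_lists)
  with no_short_s_cover_gadget assms show False by blast
qed

lemma two_le_card_shortest_s_covers_gadget: "2 \<le> card {C. shortest_s_cover C gadget}"
proof -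
  have "shortest_s_cover C gadget" if "s_cover C gadget" "length C = 6" for C
    using that length_s_cover_gadget by (simp add: shortest_s_cover_def)
  then have "{[0, 1, 2, 0, 1, 0], [0, 1, 0, 2, 1, 0]} \<subseteq> {C. shortest_s_cover C gadget}"
    using s_cover_gadget by simp
  from card_mono[OF finite_shortest_s_covers this] show ?thesis by simp
qed

fun gadget_blocks :: "nat \<Rightarrow> nat list" where
  "gadget_blocks q =
     (if q = 0 then [] else if q = 1 then gadget
      else gadget_blocks (q div 2) @ (2 + ceillog2 q) # gadget_blocks (q - q div 2))"

declare gadget_blocks.simps [simp del]

lemma ceillog2_half_less:
  assumes "2 \<le> q"
  shows "ceillog2 (q div 2) < ceillog2 q" "ceillog2 (q - q div 2) < ceillog2 q"
proof -
  have "(q + 1) div 2 = q - q div 2" by presburger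
  then have "ceillog2 q = Suc (ceillog2 (q - q div 2))"
    using assms ceillog2_rec[of q] by simp
  moreover have "ceillog2 (q div 2) \<le> ceillog2 (q - q div 2)"
    by (rule ceillog2_mono) simp
  ultimately show "ceillog2 (q div 2) < ceillog2 q" "ceillog2 (q - q div 2) < ceillog2 q"
    by simp_all
qed

lemma length_gadget_blocks: "length (gadget_blocks q) = 13 * q - 1"
proof (induction q rule: less_induct)
  case (less q)
  then show ?case
    by (cases "2 \<le> q") (auto simp: gadget_blocks.simps[of q] gadget_def)
qed

lemma set_gadget_blocks: "set (gadget_blocks q) \<subseteq> {..<3 + ceillog2 q}"
proof (induction q rule: less_induct)
  case (less q)
  show ?case
  proof (cases "2 \<le> q")
    case True
    have "set (gadget_blocks p) \<subseteq> {..<3 + ceillog2 q}" if "p = q div 2 \<or> p = q - q div 2" for p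
    proof -
      have "set (gadget_blocks p) \<subseteq> {..<3 + ceillog2 p}" using less.IH[of p] that True by auto
      also have "\<dots> \<subseteq> {..<3 + ceillog2 q}" using ceillog2_half_less[OF True] that by auto
      finally show ?thesis .
    qed
    with True show ?thesis by (auto simp: gadget_blocks.simps[of q])
  qed (auto simp: gadget_blocks.simps[of q] gadget_def)
qed

lemma card_shortest_s_covers_gadget_blocks:
  "1 \<le> q \<Longrightarrow>
    card {C. shortest_s_cover C (gadget_blocks q)} = card {C. shortest_s_cover C gadget} ^ q"
proof (induction q rule: less_induct)
  case (less q)
  show ?case
  proof (cases "2 \<le> q")
    case True
    let ?l = "q div 2" and ?r = "q - q div 2" and ?x = "2 + ceillog2 q"
    have "?x \<notin> set (gadget_blocks ?l)" "?x \<notin> set (gadget_blocks ?r)"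
      using set_gadget_blocks[of ?l] set_gadget_blocks[of ?r] ceillog2_half_less[OF True] by auto
    moreover have "gadget_blocks ?l \<noteq> []" "gadget_blocks ?r \<noteq> []"
      using length_gadget_blocks[of ?l] length_gadget_blocks[of ?r] True by auto
    ultimately have "card {C. shortest_s_cover C (gadget_blocks q)} =
        card {C. shortest_s_cover C (gadget_blocks ?l)} * card {C. shortest_s_cover C (gadget_blocks ?r)}"
      using True card_shortest_s_covers_append_Cons by (simp add: gadget_blocks.simps[of q])
    also have "\<dots> = card {C. shortest_s_cover C gadget} ^ q"
      using less.IH[of ?l] less.IH[of ?r] True by (simp flip: power_add)
    finally show ?thesis .
  next
    case False
    with less.prems have "q = 1" by simp
    then show ?thesis by (subst gadget_blocks.simps) simp
  qed
qed

definition many_covers_word :: "nat \<Rightarrow> nat list" where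
  "many_covers_word n =
     (let q = (n + 1) div 16 in
      if q = 0 then replicate n 0
      else gadget_blocks q @ (3 + ceillog2 q) # replicate (n - 13 * q) 0)"

lemma many_covers_word_eq:
  assumes "q = (n + 1) div 16" "1 \<le> q"
  shows "many_covers_word n = gadget_blocks q @ (3 + ceillog2 q) # replicate (n - 13 * q) 0"
    and "2 \<le> n - 13 * q"
  using assms by (auto simp: many_covers_word_def Let_def)

lemma length_many_covers_word: "length (many_covers_word n) = n"
proof (cases "(n + 1) div 16 = 0")
  case False
  with many_covers_word_eq[OF refl] show ?thesis
    by (simp add: length_gadget_blocks)
qed (simp add: many_covers_word_def)

lemma set_many_covers_word: "set (many_covers_word n) \<subseteq> {..<4 + ceillog2 ((n + 1) div 16)}"
proof (cases "(n + 1) div 16 = 0")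
  case False
  with many_covers_word_eq[OF refl] set_gadget_blocks show ?thesis
    by fastforce
qed (simp add: many_covers_word_def set_replicate_conv_if)

lemma card_shortest_s_covers_many_covers_word:
  "2 ^ ((n + 1) div 16) \<le> card {C. shortest_s_cover C (many_covers_word n)}"
proof (cases "(n + 1) div 16 = 0")
  case True
  then show ?thesis using card_shortest_s_covers_pos by (simp add: Suc_le_eq)
next
  case False
  define q where "q = (n + 1) div 16"
  let ?x = "3 + ceillog2 q" and ?pad = "replicate (n - 13 * q) (0::nat)"
  have word: "many_covers_word n = gadget_blocks q @ ?x # ?pad" and pad: "2 \<le> n - 13 * q"
    using many_covers_word_eq[OF q_def] False q_def by auto
  have "?x \<notin> set (gadget_blocks q)" "?x \<notin> set ?pad" "gadget_blocks q \<noteq> []" "?pad \<noteq> []"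
    using set_gadget_blocks[of q] length_gadget_blocks[of q] pad False q_def by auto
  from card_shortest_s_covers_append_Cons[OF this]
  have "card {C. shortest_s_cover C (many_covers_word n)} =
      card {C. shortest_s_cover C gadget} ^ q * card {C. shortest_s_cover C ?pad}"
    using False q_def by (simp add: word card_shortest_s_covers_gadget_blocks)
  moreover have "2 ^ q \<le> card {C. shortest_s_cover C gadget} ^ q"
    using two_le_card_shortest_s_covers_gadget by (simp add: power_mono)
  moreover have "1 \<le> card {C. shortest_s_cover C ?pad}"
    using card_shortest_s_covers_pos by (simp add: Suc_le_eq)
  ultimately show ?thesis
    unfolding q_def by (metis mult.right_neutral mult_le_mono)
qed

lemma ceillog2_div_16_bigo_ln: "(\<lambda>n. real (4 + ceillog2 ((n + 1) div 16))) \<in> O(\<lambda>n. ln (real n))"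
proof -
  have "(\<lambda>n. real (4 + ceillog2 ((n + 1) div 16))) \<in> O(\<lambda>n. 5 + log 2 (real n))"
  proof (rule bigoI[where c = 1], rule eventually_mono[OF eventually_ge_at_top[of "1::nat"]])
    fix n :: nat assume "1 \<le> n"
    have "ceillog2 ((n + 1) div 16) \<le> ceillog2 n"
      by (rule ceillog2_mono) linarith
    moreover have "real (ceillog2 n) < log 2 (real n) + 1"
      using \<open>1 \<le> n\<close> by (intro ceillog2_less_log) simp
    moreover have "0 \<le> log 2 (real n)"
      using \<open>1 \<le> n\<close> by simp
    ultimately show "norm (real (4 + ceillog2 ((n + 1) div 16))) \<le> 1 * norm (5 + log 2 (real n))"
      by simp
  qed
  also have "(\<lambda>n. 5 + log 2 (real n)) \<in> O(\<lambda>n. ln (real n))"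
    by real_asymp
  finally show ?thesis .
qed

theorem mainTheorem17:
  shows "\<exists>k :: nat \<Rightarrow> nat. (\<lambda>n. real (k n)) \<in> O(\<lambda>n. ln (real n)) \<and>
    (\<forall>n :: nat. n \<ge> 1 \<longrightarrow>
      (\<exists>w :: nat list. length w = n \<and> set w \<subseteq> {..<k n} \<and>
         card {C. shortest_s_cover C w} \<ge> 2 ^ ((n + 1) div 16)))"
proof (intro exI conjI allI impI)
  fix n :: nat
  show "length (many_covers_word n) = n" "set (many_covers_word n) \<subseteq> {..<4 + ceillog2 ((n + 1) div 16)}"
    "2 ^ ((n + 1) div 16) \<le> card {C. shortest_s_cover C (many_covers_word n)}"
    by (fact length_many_covers_word set_many_covers_word card_shortest_s_covers_many_covers_word)+
qed (fact ceillog2_div_16_bigo_ln)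

end
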